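(* Let $\rhd$ be a functional value system. Then for every type $\sigma$, the relation $\rhd_\sigma$ is functional (for every term $s$ there is at most one $a$ with $s\rhd_\sigma a$).
   Context: Types: a countable set of base types ($\beta$); every base type is a type and $\sigma\tau$ is a type for types $\sigma,\tau$. Countably many names, each with a unique type, infinitely many of each type. Terms: names; $st:\mu$ for $s:\tau\mu,t:\tau$; $\lambda x.t:\sigma\tau$ for a name $x:\sigma$, $t:\tau$. $\mathrm{Wff}_\sigma$ is the set of terms of type $\sigma$. A fixed type-preserving total normalization operator $[\cdot]$ on terms is given with $[[s]]=[s]$ and $[[s]t]=[st]$. A value system is a function $\rhd$ mapping each base type $\beta$ to a binary relation $\rhd_\beta$ with $\mathrm{Dom}(\rhd_\beta)\subseteq\mathrm{Wff}_\beta$ and such that $s\rhd_\beta a$ iff $[s]\rhd_\beta a$. It is extended to all types by induction: $\mathcal{D}\sigma:=\mathrm{Ran}(\rhd_\sigma)$ and $\rhd_{\sigma\tau}:=\{(s,f)\in\mathrm{Wff}_{\sigma\tau}\times(\mathcal{D}\sigma\to\mathcal{D}\tau) : \forall (t,a)\in\rhd_\sigma,\ (st,fa)\in\rhd_\tau\}$. A value system is functional if $\rhd_\beta$ is a functional relation for every base type $\beta$. *)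

theory Defs
  imports Main "HOL-Library.Countable_Set"
begin

text \<open>Base types are drawn from an arbitrary countable type 'b.  The type
  sigma tau (functions from sigma to tau) is written Arr sigma tau.\<close>
datatype 'b ty = Base 'b | Arr "'b ty" "'b ty"

text \<open>A name is a pair (n, sigma): it carries its unique type sigma, and there
  are countably many names, infinitely many of each type.\<close>
type_synonym 'b name = "nat \<times> 'b ty"

datatype 'b trm = Nm "'b name" | Ap "'b trm" "'b trm" | Lm "'b name" "'b trm"

inductive has_ty :: "'b trm \<Rightarrow> 'b ty \<Rightarrow> bool" where
  ty_Nm: "has_ty (Nm (n, \<sigma>)) \<sigma>"
| ty_Ap: "has_ty s (Arr \<sigma> \<tau>) \<Longrightarrow> has_ty t \<sigma> \<Longrightarrow> has_ty (Ap s t) \<tau>"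
| ty_Lm: "has_ty t \<tau> \<Longrightarrow> has_ty (Lm (n, \<sigma>) t) (Arr \<sigma> \<tau>)"

definition Wff :: "'b ty \<Rightarrow> 'b trm set" where
  "Wff \<sigma> = {t. has_ty t \<sigma>}"

definition normalization_op :: "('b trm \<Rightarrow> 'b trm) \<Rightarrow> bool" where
  "normalization_op nrm \<longleftrightarrow>
     (\<forall>s \<sigma>. has_ty s \<sigma> \<longrightarrow> has_ty (nrm s) \<sigma>) \<and>
     (\<forall>s \<sigma>. has_ty s \<sigma> \<longrightarrow> nrm (nrm s) = nrm s) \<and>
     (\<forall>s t \<sigma> \<tau>. has_ty s (Arr \<sigma> \<tau>) \<longrightarrow> has_ty t \<sigma> \<longrightarrow> nrm (Ap (nrm s) t) = nrm (Ap s t))"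

text \<open>Values of all types live in one universe type 'u.  A function f from a
  set A to the universe is coded as the element lam A f.  We require that the
  coding is exact (f and g get the same code iff they agree on A) for every
  countable domain A.  (Every domain D sigma arising from a functional value
  system is countable, since the domain of each relation is contained in the
  countable set of terms.)\<close>
definition fun_code :: "('u set \<Rightarrow> ('u \<Rightarrow> 'u) \<Rightarrow> 'u) \<Rightarrow> bool" where
  "fun_code lam \<longleftrightarrow>
     (\<forall>A f g. countable A \<longrightarrow> (lam A f = lam A g \<longleftrightarrow> (\<forall>a\<in>A. f a = g a)))"

definition value_system ::
    "('b trm \<Rightarrow> 'b trm) \<Rightarrow> ('b \<Rightarrow> ('b trm \<times> 'u) set) \<Rightarrow> bool" where
  "value_system nrm V \<longleftrightarrow>
     (\<forall>\<beta>. Domain (V \<beta>) \<subseteq> Wff (Base \<beta>) \<and>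
          (\<forall>s a. s \<in> Wff (Base \<beta>) \<longrightarrow> ((s, a) \<in> V \<beta> \<longleftrightarrow> (nrm s, a) \<in> V \<beta>)))"

text \<open>Extension of a value system to all types; D sigma is Range (ext lam V sigma).\<close>
primrec ext ::
    "('u set \<Rightarrow> ('u \<Rightarrow> 'u) \<Rightarrow> 'u) \<Rightarrow> ('b \<Rightarrow> ('b trm \<times> 'u) set) \<Rightarrow> 'b ty \<Rightarrow> ('b trm \<times> 'u) set"
where
  "ext lam V (Base \<beta>) = V \<beta>"
| "ext lam V (Arr \<sigma> \<tau>) =
     {(s, lam (Range (ext lam V \<sigma>)) f) | s f.
        s \<in> Wff (Arr \<sigma> \<tau>) \<and>
        f ` Range (ext lam V \<sigma>) \<subseteq> Range (ext lam V \<tau>) \<and>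
        (\<forall>(t, a) \<in> ext lam V \<sigma>. (Ap s t, f a) \<in> ext lam V \<tau>)}"

definition functional_vs :: "('b \<Rightarrow> ('b trm \<times> 'u) set) \<Rightarrow> bool" where
  "functional_vs V \<longleftrightarrow> (\<forall>\<beta>. single_valued (V \<beta>))"

end

theory Submission
  imports Defs
begin

text \<open>At an arrow type
  \<open>\<sigma>\<tau>\<close>, two values of \<open>s\<close> are codes \<open>lam D f\<close> and \<open>lam D g\<close> with \<open>D = \<D>\<sigma>\<close>; for every
  \<open>a \<in> D\<close>, pick \<open>t \<rhd>\<^sub>\<sigma> a\<close>: then \<open>st \<rhd>\<^sub>\<tau> f a\<close> and \<open>st \<rhd>\<^sub>\<tau> g a\<close>, so \<open>f a = g a\<close> by the
  induction hypothesis at \<open>\<tau>\<close>.  Exactness of the coding then needs \<open>D\<close> countable,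
  which holds because by the induction hypothesis at \<open>\<sigma>\<close> the relation \<open>\<rhd>\<^sub>\<sigma>\<close> maps
  the countable set of terms onto \<open>D\<close>.\<close>

instance ty :: (countable) countable by countable_datatype
instance trm :: (countable) countable by countable_datatype

lemma countable_Range_single_valued:
  assumes "single_valued R" and "countable (Domain R)"
  shows "countable (Range R)"
proof -
  have "Range R \<subseteq> (\<lambda>x. THE y. (x, y) \<in> R) ` Domain R"
  proof
    fix y assume "y \<in> Range R"
    then obtain x where xy: "(x, y) \<in> R" by blast
    with assms(1) have "(THE y. (x, y) \<in> R) = y"
      by (auto simp: single_valued_def)
    with xy show "y \<in> (\<lambda>x. THE y. (x, y) \<in> R) ` Domain R" by force
  qed
  then show ?thesis
    using assms(2) by (rule countable_subset[OF _ countable_image])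
qed

lemma single_valued_ext_Arr:
  fixes V :: "('b::countable) \<Rightarrow> ('b trm \<times> 'u) set"
  assumes "fun_code lam"
    and \<sigma>: "single_valued (ext lam V \<sigma>)"
    and \<tau>: "single_valued (ext lam V \<tau>)"
  shows "single_valued (ext lam V (Arr \<sigma> \<tau>))"
proof (rule single_valuedI)
  let ?D = "Range (ext lam V \<sigma>)"
  fix s x y
  assume "(s, x) \<in> ext lam V (Arr \<sigma> \<tau>)" "(s, y) \<in> ext lam V (Arr \<sigma> \<tau>)"
  then obtain f g where x: "x = lam ?D f" and y: "y = lam ?D g"
    and f: "\<forall>(t, a) \<in> ext lam V \<sigma>. (Ap s t, f a) \<in> ext lam V \<tau>"
    and g: "\<forall>(t, a) \<in> ext lam V \<sigma>. (Ap s t, g a) \<in> ext lam V \<tau>"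
    by auto
  have agree: "\<forall>a\<in>?D. f a = g a"
  proof
    fix a assume "a \<in> ?D"
    then obtain t where "(t, a) \<in> ext lam V \<sigma>" by blast
    with f g have "(Ap s t, f a) \<in> ext lam V \<tau>" "(Ap s t, g a) \<in> ext lam V \<tau>" by auto
    with \<tau> show "f a = g a" by (auto simp: single_valued_def)
  qed
  have "countable ?D"
    using countable_Range_single_valued[OF \<sigma>] by simp
  with agree assms(1) show "x = y"
    by (simp add: x y fun_code_def)
qed

theorem proposition3p2:
  fixes nrm :: "('b::countable) trm \<Rightarrow> 'b trm"
    and lam :: "'u set \<Rightarrow> ('u \<Rightarrow> 'u) \<Rightarrow> 'u"
    and V :: "'b \<Rightarrow> ('b trm \<times> 'u) set"
  assumes "normalization_op nrm"
    and "fun_code lam"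
    and "value_system nrm V"
    and "functional_vs V"
  shows "\<forall>\<sigma>. single_valued (ext lam V \<sigma>)"
proof
  fix \<sigma> show "single_valued (ext lam V \<sigma>)"
  proof (induction \<sigma>)
    case (Base \<beta>)
    with assms(4) show ?case by (simp add: functional_vs_def)
  next
    case (Arr \<sigma> \<tau>)
    with assms(2) show ?case by (rule single_valued_ext_Arr)
  qed
qed

end
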